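(* Let $U=\{x\in\mathbb R^4:x^2+x^4>0\}$. A smooth covector field $A$ on $U$ satisfies $L_\xi A=0$ for $\xi\in\{e_{12}-e_{14},\,e_{23}+e_{34},\,e_{24},\,e_1,\,e_3,\,e_2-e_4\}$ if and only if there is a real constant $B$ with $$A=\Big(0,\ \frac{B}{x^2+x^4},\ 0,\ \frac{B}{x^2+x^4}\Big).$$
   Context: Work in $\mathbb R^4$ with Galilean (Cartesian) coordinates $x^1,x^2,x^3,x^4$ of Minkowski space (metric $\mathrm{diag}(-1,-1,-1,1)$). A potential on an open set $U\subseteq\mathbb R^4$ is a smooth covector field $A=A_i\,dx^i$; its components $A_i$ are always those with respect to the coordinates $x^i$, even when written as functions of other variables. For a vector field $\xi=\xi^k\partial_k$ the Lie derivative is $(L_\xi A)_i=\xi^k\partial_kA_i+A_k\partial_i\xi^k$. The vector fields used are, by components $(\xi^1,\xi^2,\xi^3,\xi^4)$: $e_1=(1,0,0,0)$, $e_2=(0,1,0,0)$, $e_3=(0,0,1,0)$, $e_4=(0,0,0,1)$, $e_{12}=(-x^2,x^1,0,0)$, $e_{13}=(x^3,0,-x^1,0)$, $e_{23}=(0,-x^3,x^2,0)$, $e_{14}=(x^4,0,0,x^1)$, $e_{24}=(0,x^4,0,x^2)$, $e_{34}=(0,0,x^4,x^3)$. A potential admits a family of vector fields if $L_\xi A=0$ for each $\xi$ in it (equivalently for every element of their linear span). "Functions" are smooth real functions; $\mathrm{ch}=\cosh$, $\mathrm{sh}=\sinh$. *)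

theory Defs
  imports "HOL-Analysis.Analysis"
begin

text \<open>Points of R^4 are elements of real^4. The Galilean coordinate x^k (k = 1..4)
  is the component at index idx k (the elements 0,1,2,3 of the index type 4).\<close>

definition idx :: "nat \<Rightarrow> 4" where
  "idx k = of_nat (k - 1)"

definition coord :: "nat \<Rightarrow> real^4 \<Rightarrow> real" where
  "coord k x = x $ idx k"

definition mk4 :: "real \<Rightarrow> real \<Rightarrow> real \<Rightarrow> real \<Rightarrow> real^4" where
  "mk4 a b c d = (\<chi> j. if j = idx 1 then a else if j = idx 2 then b
                       else if j = idx 3 then c else d)"

definition partial :: "4 \<Rightarrow> (real^4 \<Rightarrow> real) \<Rightarrow> real^4 \<Rightarrow> real" where
  "partial i f x = frechet_derivative f (at x) (axis i 1)"

fun Ck_on :: "nat \<Rightarrow> (real^4) set \<Rightarrow> (real^4 \<Rightarrow> real) \<Rightarrow> bool" where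
  "Ck_on 0 U f = continuous_on U f"
| "Ck_on (Suc k) U f = ((\<forall>x\<in>U. f differentiable (at x)) \<and> (\<forall>i. Ck_on k U (partial i f)))"

definition smooth_on :: "(real^4) set \<Rightarrow> (real^4 \<Rightarrow> real) \<Rightarrow> bool" where
  "smooth_on U f = (\<forall>k. Ck_on k U f)"

definition lie :: "(real^4 \<Rightarrow> real^4) \<Rightarrow> (real^4 \<Rightarrow> real^4) \<Rightarrow> real^4 \<Rightarrow> real^4" where
  "lie xi A x = (\<chi> i. \<Sum>k\<in>UNIV. xi x $ k * partial k (\<lambda>y. A y $ i) x
                                  + A x $ k * partial i (\<lambda>y. xi y $ k) x)"

definition e1 :: "real^4 \<Rightarrow> real^4" where "e1 x = mk4 1 0 0 0"
definition e2 :: "real^4 \<Rightarrow> real^4" where "e2 x = mk4 0 1 0 0"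
definition e3 :: "real^4 \<Rightarrow> real^4" where "e3 x = mk4 0 0 1 0"
definition e4 :: "real^4 \<Rightarrow> real^4" where "e4 x = mk4 0 0 0 1"
definition e12 :: "real^4 \<Rightarrow> real^4" where "e12 x = mk4 (- coord 2 x) (coord 1 x) 0 0"
definition e13 :: "real^4 \<Rightarrow> real^4" where "e13 x = mk4 (coord 3 x) 0 (- coord 1 x) 0"
definition e23 :: "real^4 \<Rightarrow> real^4" where "e23 x = mk4 0 (- coord 3 x) (coord 2 x) 0"
definition e14 :: "real^4 \<Rightarrow> real^4" where "e14 x = mk4 (coord 4 x) 0 0 (coord 1 x)"
definition e24 :: "real^4 \<Rightarrow> real^4" where "e24 x = mk4 0 (coord 4 x) 0 (coord 2 x)"
definition e34 :: "real^4 \<Rightarrow> real^4" where "e34 x = mk4 0 0 (coord 4 x) (coord 3 x)"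

end

theory Submission
  imports Defs
begin

(* The translation fields e1, e3 and e2 - e4 force each component A_i to depend on x only
   through the null coordinate u = x^2 + x^4, so dA_i = a_i du. For such A the fields
   e12 - e14 and e23 + e34 leave u invariant and only their term A_k d_i xi^k survives, which
   gives A_1 = A_3 = 0 and A_2 = A_4; the flow of e24 rescales u, and L_e24 A = 0 becomes
   u a_i + A_i = 0, i.e. d(u A_i) = 0. On the convex half-space u > 0 this makes u A_2 a
   constant B. *)

lemma numeral_4_eq_0: "(4::4) = 0"
  by simp

lemma forall_4_from_0: "(\<forall>i::4. P i) \<longleftrightarrow> P 0 \<and> P 1 \<and> P 2 \<and> P 3"
  using forall_4[of P] by (auto simp: numeral_4_eq_0)

lemma sum_4_from_0: "(\<Sum>k\<in>(UNIV::4 set). f k) = f 0 + f 1 + f 2 + f 3"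
  using sum_4[of f] by (simp add: numeral_4_eq_0 add_ac)

lemma idx_surj: "idx ` {1..4} = UNIV"
proof -
  have "{1..4::nat} = {1, 2, 3, 4}" and "idx 1 = 4" "idx 2 = 1" "idx 3 = 2" "idx 4 = 3"
    by (auto simp: idx_def)
  then show ?thesis
    by (auto simp: UNIV_4)
qed

lemma mk4_nth [simp]:
  "mk4 a b c d $ 0 = a" "mk4 a b c d $ 1 = b" "mk4 a b c d $ 2 = c" "mk4 a b c d $ 3 = d"
  by (simp_all add: mk4_def idx_def)

lemma smooth_on_imp_differentiable: "smooth_on U f \<Longrightarrow> x \<in> U \<Longrightarrow> f differentiable (at x)"
  unfolding smooth_on_def by (metis Ck_on.simps(2))

lemma partial_eqI: "(f has_derivative f') (at x) \<Longrightarrow> partial i f x = f' (axis i 1)"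
  unfolding partial_def by (metis frechet_derivative_at)

lemma linear_functional_expansion:
  fixes D :: "real^'n \<Rightarrow> real"
  assumes "linear D"
  shows "D h = (\<Sum>k\<in>UNIV. h $ k * D (axis k 1))"
proof -
  have "D h = D (\<Sum>k\<in>UNIV. h $ k *s axis k 1)"
    by (simp add: basis_expansion)
  also have "\<dots> = (\<Sum>k\<in>UNIV. h $ k * D (axis k 1))"
    by (simp add: linear_sum[OF assms] linear_cmul[OF assms] scalar_mult_eq_scaleR)
  finally show ?thesis .
qed

lemma lie_eq_derivatives:
  assumes DA: "\<And>i. ((\<lambda>y. A y $ i) has_derivative DA i) (at x)"
    and M: "(xi has_derivative M) (at x)"
  shows "lie xi A x = (\<chi> i. DA i (xi x) + A x \<bullet> M (axis i 1))"
proof -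
  have "partial i (\<lambda>y. xi y $ k) x = M (axis i 1) $ k" for i k
    by (rule partial_eqI) (rule bounded_linear.has_derivative[OF bounded_linear_vec_nth M])
  moreover have "partial k (\<lambda>y. A y $ i) x = DA i (axis k 1)" for i k
    by (rule partial_eqI[OF DA])
  moreover have "DA i (xi x) = (\<Sum>k\<in>UNIV. xi x $ k * DA i (axis k 1))" for i
    using DA has_derivative_linear linear_functional_expansion by blast
  ultimately show ?thesis
    by (simp add: lie_def sum.distrib inner_vec_def vec_eq_iff mult.commute)
qed

lemma lie_const_field:
  assumes "\<And>i. ((\<lambda>y. A y $ i) has_derivative DA i) (at x)"
  shows "lie (\<lambda>_. v) A x = (\<chi> i. DA i v)"
  using lie_eq_derivatives[OF assms has_derivative_const] by simp

lemma lie_linear_field: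
  assumes "\<And>i. ((\<lambda>y. A y $ i) has_derivative DA i) (at x)" and "linear xi"
  shows "lie xi A x = (\<chi> i. DA i (xi x) + A x \<bullet> xi (axis i 1))"
  using lie_eq_derivatives[OF assms(1) linear_imp_has_derivative[OF assms(2)]] .

lemma has_derivative_const_divide_linear:
  fixes l :: "'a::real_normed_vector \<Rightarrow> real"
  assumes "bounded_linear l" and "l x \<noteq> 0"
  shows "((\<lambda>y. b / l y) has_derivative (\<lambda>h. - b * l h / l x ^ 2)) (at x)"
  using assms
  by (auto intro!: derivative_eq_intros bounded_linear.has_derivative[OF assms(1)]
      simp: power2_eq_square field_simps)

definition symmetry_fields :: "(real^4 \<Rightarrow> real^4) set" where
  "symmetry_fields = {\<lambda>x. e12 x - e14 x, \<lambda>x. e23 x + e34 x, e24, e1, e3, \<lambda>x. e2 x - e4 x}"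

lemma translation_fields:
  "e1 = (\<lambda>_. axis 0 1)" "e3 = (\<lambda>_. axis 2 1)" "(\<lambda>x. e2 x - e4 x) = (\<lambda>_. axis 1 1 - axis 3 1)"
  by (auto simp: e1_def e2_def e3_def e4_def vec_eq_iff forall_4_from_0 axis_def)

lemma rotation_fields_nth:
  "e12 x = mk4 (- x $ 1) (x $ 0) 0 0" "e14 x = mk4 (x $ 3) 0 0 (x $ 0)"
  "e23 x = mk4 0 (- x $ 2) (x $ 1) 0" "e34 x = mk4 0 0 (x $ 3) (x $ 2)"
  "e24 x = mk4 0 (x $ 3) 0 (x $ 1)"
  by (simp_all add: e12_def e14_def e23_def e34_def e24_def coord_def idx_def)

lemma linear_rotation_fields:
  "linear (\<lambda>x. e12 x - e14 x)" "linear (\<lambda>x. e23 x + e34 x)" "linear e24"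
  by (intro linearI; simp add: rotation_fields_nth vec_eq_iff forall_4_from_0 algebra_simps)+

definition null_coord :: "real^4 \<Rightarrow> real" where
  "null_coord x = coord 2 x + coord 4 x"

lemma null_coord_eq: "null_coord x = x $ 1 + x $ 3"
  by (simp add: null_coord_def coord_def idx_def)

lemma linear_null_coord: "linear null_coord"
  by (rule linearI) (simp_all add: null_coord_eq algebra_simps)

lemma bounded_linear_null_coord: "bounded_linear null_coord"
  using linear_null_coord linear_conv_bounded_linear by blast

definition null_halfspace :: "(real^4) set" where
  "null_halfspace = {x. 0 < null_coord x}"

lemma open_null_halfspace: "open null_halfspace"
  unfolding null_halfspace_def null_coord_eq by (intro open_Collect_less continuous_intros)

lemma convex_null_halfspace: "convex null_halfspace"
  using convex_linear_vimage[OF linear_null_coord convex_real_interval(3)[of 0]]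
  by (simp add: null_halfspace_def vimage_def)

lemma linear_functional_along_null_coord:
  assumes "linear D" and "D (axis 0 1) = 0" "D (axis 2 1) = 0" "D (axis 1 1) = D (axis 3 1)"
  shows "D h = null_coord h * D (axis 1 1)"
  using linear_functional_expansion[OF assms(1), of h] assms(2-4)
  by (simp add: sum_4_from_0 null_coord_eq algebra_simps)

lemma lie_rotation_fields:
  assumes DA: "\<And>i. ((\<lambda>y. A y $ i) has_derivative DA i) (at x)"
    and translation_invariant:
      "\<forall>i. DA i (axis 0 1) = 0 \<and> DA i (axis 2 1) = 0 \<and> DA i (axis 1 1) = DA i (axis 3 1)"
  shows "lie (\<lambda>x. e12 x - e14 x) A x = mk4 (A x $ 1 - A x $ 3) (- A x $ 0) 0 (- A x $ 0)"
      (is ?e12_e14)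
    and "lie (\<lambda>x. e23 x + e34 x) A x = mk4 0 (A x $ 2) (A x $ 3 - A x $ 1) (A x $ 2)"
      (is ?e23_e34)
    and "lie e24 A x = (\<chi> i. null_coord x * DA i (axis 1 1)) + mk4 0 (A x $ 3) 0 (A x $ 1)"
      (is ?e24)
proof -
  have DA_eq: "DA i h = null_coord h * DA i (axis 1 1)" for i h
    using linear_functional_along_null_coord has_derivative_linear[OF DA] translation_invariant
    by blast
  show ?e12_e14 ?e23_e34 ?e24
    unfolding lie_linear_field[OF DA linear_rotation_fields(1)]
      lie_linear_field[OF DA linear_rotation_fields(2)] lie_linear_field[OF DA linear_rotation_fields(3)]
      DA_eq[of _ "e12 x - e14 x"] DA_eq[of _ "e23 x + e34 x"] DA_eq[of _ "e24 x"]
    by (simp_all add: vec_eq_iff forall_4_from_0 inner_vec_def sum_4_from_0 axis_def null_coord_eq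
        rotation_fields_nth)
qed

lemma symmetry_fields_lie_zero_iff:
  assumes DA: "\<And>i. ((\<lambda>y. A y $ i) has_derivative DA i) (at x)" and "null_coord x \<noteq> 0"
  shows "(\<forall>xi\<in>symmetry_fields. lie xi A x = 0) \<longleftrightarrow>
    (A x $ 0 = 0 \<and> A x $ 2 = 0 \<and> A x $ 3 = A x $ 1) \<and>
    (\<forall>i h. null_coord x * DA i h + null_coord h * A x $ i = 0)"
    (is "?lie \<longleftrightarrow> ?shape \<and> ?stationary")
proof -
  let ?translation_invariant =
    "\<forall>i. DA i (axis 0 1) = 0 \<and> DA i (axis 2 1) = 0 \<and> DA i (axis 1 1) = DA i (axis 3 1)"
  have lin: "linear (DA i)" for i
    using has_derivative_linear[OF DA] .
  have translation_lie: "lie e1 A x = 0 \<and> lie e3 A x = 0 \<and> lie (\<lambda>x. e2 x - e4 x) A x = 0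
      \<longleftrightarrow> ?translation_invariant"
    unfolding translation_fields lie_const_field[OF DA]
    by (auto simp: vec_eq_iff linear_diff[OF lin])
  show ?thesis
  proof
    assume ?lie
    then have translation_invariant: ?translation_invariant
      and rotation_lie: "lie (\<lambda>x. e12 x - e14 x) A x = 0" "lie (\<lambda>x. e23 x + e34 x) A x = 0"
        "lie e24 A x = 0"
      using translation_lie by (auto simp: symmetry_fields_def)
    from rotation_lie have shape: ?shape
      and null_derivative: "\<forall>i. null_coord x * DA i (axis 1 1) + A x $ i = 0"
      unfolding lie_rotation_fields[OF DA translation_invariant]
      by (auto simp: vec_eq_iff forall_4_from_0)
    have ?stationary
    proof (intro allI)
      fix i h
      have "DA i h = null_coord h * DA i (axis 1 1)"
        using linear_functional_along_null_coord[OF lin] translation_invariant by blast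
      then have "null_coord x * DA i h + null_coord h * A x $ i
          = null_coord h * (null_coord x * DA i (axis 1 1) + A x $ i)"
        by (simp add: algebra_simps)
      then show "null_coord x * DA i h + null_coord h * A x $ i = 0"
        using null_derivative by simp
    qed
    with shape show "?shape \<and> ?stationary" ..
  next
    assume rhs: "?shape \<and> ?stationary"
    have null_derivative: "null_coord x * DA i h = - null_coord h * A x $ i" for i h
      using rhs by (simp add: eq_neg_iff_add_eq_0)
    have "DA i h = - null_coord h * A x $ i / null_coord x" for i h
      using null_derivative[of i h] \<open>null_coord x \<noteq> 0\<close> by (simp add: field_simps)
    then have translation_invariant: ?translation_invariant
      by (simp add: null_coord_eq axis_def)
    moreover have "null_coord (axis 1 1) = 1"
      by (simp add: null_coord_eq axis_def)
    ultimately show ?lie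
      using translation_lie rhs null_derivative[of _ "axis 1 1"]
      by (simp add: symmetry_fields_def lie_rotation_fields[OF DA translation_invariant]
          vec_eq_iff forall_4_from_0)
  qed
qed

lemma potential_of_lie_zero:
  assumes diff: "\<And>i x. x \<in> null_halfspace \<Longrightarrow> (\<lambda>y. A y $ i) differentiable (at x)"
    and lie_zero: "\<forall>xi\<in>symmetry_fields. \<forall>x\<in>null_halfspace. lie xi A x = 0"
  shows "\<exists>B. \<forall>x\<in>null_halfspace. A x = mk4 0 (B / null_coord x) 0 (B / null_coord x)"
proof -
  have shape: "A x $ 0 = 0 \<and> A x $ 2 = 0 \<and> A x $ 3 = A x $ 1"
    and stationary:
      "((\<lambda>y. null_coord y * A y $ 1) has_derivative (\<lambda>h. 0)) (at x within null_halfspace)"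
    if x: "x \<in> null_halfspace" for x
  proof -
    define DA where "DA i = frechet_derivative (\<lambda>y. A y $ i) (at x)" for i
    have DA: "((\<lambda>y. A y $ i) has_derivative DA i) (at x)" for i
      unfolding DA_def using diff[OF x] frechet_derivative_works by blast
    have "null_coord x \<noteq> 0"
      using x by (simp add: null_halfspace_def)
    with lie_zero x have "(A x $ 0 = 0 \<and> A x $ 2 = 0 \<and> A x $ 3 = A x $ 1)
        \<and> (\<forall>i h. null_coord x * DA i h + null_coord h * A x $ i = 0)"
      using symmetry_fields_lie_zero_iff[OF DA] by blast
    moreover have "((\<lambda>y. null_coord y * A y $ 1) has_derivative
        (\<lambda>h. null_coord x * DA 1 h + null_coord h * A x $ 1)) (at x)"
      using has_derivative_mult[OF linear_imp_has_derivative[OF linear_null_coord] DA] .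
    ultimately show "A x $ 0 = 0 \<and> A x $ 2 = 0 \<and> A x $ 3 = A x $ 1"
      and "((\<lambda>y. null_coord y * A y $ 1) has_derivative (\<lambda>h. 0)) (at x within null_halfspace)"
      by (auto intro: has_derivative_at_withinI)
  qed
  obtain B where B: "\<forall>x\<in>null_halfspace. null_coord x * A x $ 1 = B"
    using has_derivative_zero_constant[OF convex_null_halfspace stationary] by blast
  have "A x = mk4 0 (B / null_coord x) 0 (B / null_coord x)" if "x \<in> null_halfspace" for x
    using shape[OF that] B that
    by (auto simp: vec_eq_iff forall_4_from_0 null_halfspace_def field_simps)
  then show ?thesis
    by blast
qed

lemma lie_zero_of_potential:
  assumes A: "\<forall>x\<in>null_halfspace. A x = mk4 0 (B / null_coord x) 0 (B / null_coord x)"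
  shows "\<forall>xi\<in>symmetry_fields. \<forall>x\<in>null_halfspace. lie xi A x = 0"
proof (intro ballI)
  fix xi x
  assume xi: "xi \<in> symmetry_fields" and x: "x \<in> null_halfspace"
  define b where "b i = mk4 0 B 0 B $ i" for i
  define DA where "DA i h = - b i * null_coord h / null_coord x ^ 2" for i h
  have A_nth: "A y $ i = b i / null_coord y" if "y \<in> null_halfspace" for y i
    using A that exhaust_4[of i] by (auto simp: b_def numeral_4_eq_0)
  have nonzero: "null_coord x \<noteq> 0"
    using x by (simp add: null_halfspace_def)
  have DA: "((\<lambda>y. A y $ i) has_derivative DA i) (at x)" for i
    unfolding DA_def
    using has_derivative_const_divide_linear[OF bounded_linear_null_coord nonzero]
    by (rule has_derivative_transform_within_open[OF _ open_null_halfspace x]) (simp add: A_nth)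
  have "(A x $ 0 = 0 \<and> A x $ 2 = 0 \<and> A x $ 3 = A x $ 1)
      \<and> (\<forall>i h. null_coord x * DA i h + null_coord h * A x $ i = 0)"
    using A x A_nth[OF x] nonzero by (simp add: DA_def field_simps power2_eq_square)
  then show "lie xi A x = 0"
    using symmetry_fields_lie_zero_iff[OF DA nonzero] xi by blast
qed

theorem mainTheorem18:
  fixes A :: "real^4 \<Rightarrow> real^4"
  assumes smooth: "\<forall>k\<in>{1..4}. smooth_on {x. coord 2 x + coord 4 x > 0} (\<lambda>x. coord k (A x))"
  shows "(\<forall>xi\<in>{\<lambda>x. e12 x - e14 x, \<lambda>x. e23 x + e34 x, e24, e1, e3,
              \<lambda>x. e2 x - e4 x}.
            \<forall>x\<in>{x. coord 2 x + coord 4 x > 0}. lie xi A x = 0)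
         \<longleftrightarrow> (\<exists>B::real. \<forall>x\<in>{x. coord 2 x + coord 4 x > 0}.
               A x = mk4 0 (B / (coord 2 x + coord 4 x)) 0 (B / (coord 2 x + coord 4 x)))"
proof -
  have halfspace: "{x. coord 2 x + coord 4 x > 0} = null_halfspace"
    by (simp add: null_halfspace_def null_coord_def)
  have "(\<lambda>y. A y $ i) differentiable (at x)" if "x \<in> null_halfspace" for i x
  proof -
    obtain k where "k \<in> {1..4}" "idx k = i"
      using idx_surj by (metis UNIV_I imageE)
    then have "smooth_on null_halfspace (\<lambda>y. A y $ i)"
      using smooth halfspace by (auto simp: coord_def)
    then show ?thesis
      using smooth_on_imp_differentiable that by blast
  qed
  then show ?thesis
    unfolding null_coord_def[symmetric] null_halfspace_def[symmetric] symmetry_fields_def[symmetric]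
    using potential_of_lie_zero lie_zero_of_potential by blast
qed

end
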